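(* Let $d'\ge 3$ and let $\alpha,\beta,\gamma,\delta$ be four pairwise distinct elements of $\{0,1,2\}^{d'}$. Then: (i) there exist distinct $v',w'\in\{0,1,2\}^{d'}\setminus\{\alpha,\beta,\gamma,\delta\}$ and indices $i,j\in[d']$ such that $v'_i=\alpha_i$ and $v'_j=\beta_j$; (ii) there exist distinct $v',w'\in\{0,1,2\}^{d'}\setminus\{\alpha,\beta,\gamma,\delta\}$, an index $j\in[d']$, and a $2$-element subset $\mathcal{I}\subseteq[d']$ such that $v'_j=\alpha_j$ and $v'_i=w'_i$ for each $i\in\mathcal{I}$.
   Context: For $u\in\{0,1,2\}^{d'}$, $u_i$ denotes its $i$-th coordinate, and $[d']=\{1,\dots,d'\}$. *)

theory Defs
  imports Main
begin

definition cube :: "nat \<Rightarrow> (nat \<Rightarrow> nat) set" where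
  "cube d = {u. (\<forall>i\<in>{1..d}. u i \<in> {0,1,2}) \<and> (\<forall>i. i \<notin> {1..d} \<longrightarrow> u i = 0)}"

end

theory Submission
  imports Defs
begin

text \<open>Only coordinates 1, 2, 3 matter. Choose a pair (b, c) that is not the (2,3)-projection of
  any of the four given points and satisfies b = \<beta> 2 or c = \<beta> 3: such pairs form a cross
  with 5 > 4 elements in {0,1,2} \<times> {0,1,2}. Then \<alpha> with coordinates 2, 3 replaced by b, c,
  and its copy with a changed first coordinate, are two distinct points avoiding the four given
  ones that witness both (i) and (ii).\<close>

lemma cube_le_2: "u \<in> cube d \<Longrightarrow> i \<in> {1..d} \<Longrightarrow> u i \<le> 2"
  unfolding cube_def by force

lemma cube_fun_upd: "u \<in> cube d \<Longrightarrow> i \<in> {1..d} \<Longrightarrow> x \<le> 2 \<Longrightarrow> u(i := x) \<in> cube d"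
  unfolding cube_def by auto

lemma card_cross:
  assumes "finite A" "y \<in> A" "z \<in> A"
  shows "card ({y} \<times> A \<union> A \<times> {z}) = 2 * card A - 1"
proof -
  have "card ({y} \<times> A) + card (A \<times> {z}) = card ({y} \<times> A \<union> A \<times> {z}) + card ({y} \<times> A \<inter> A \<times> {z})"
    using assms(1) by (intro card_Un_Int) auto
  moreover have "{y} \<times> A \<inter> A \<times> {z} = {(y, z)}"
    using assms by auto
  ultimately show ?thesis
    by (simp add: card_cartesian_product)
qed

lemma cube_pair_avoiding:
  assumes "d \<ge> 3" "\<alpha> \<in> cube d" "\<beta> \<in> cube d" "finite E" "card E \<le> 4"
  obtains v w where "v \<in> cube d - E" "w \<in> cube d - E" "v \<noteq> w"
    "v 1 = \<alpha> 1" "v 2 = \<beta> 2 \<or> v 3 = \<beta> 3" "v 2 = w 2" "v 3 = w 3"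
proof -
  let ?A = "{0, 1, 2 :: nat}"
  let ?q = "\<lambda>u :: nat \<Rightarrow> nat. (u 2, u 3)"
  have coords: "1 \<in> {1..d}" "2 \<in> {1..d}" "3 \<in> {1..d}"
    using assms(1) by auto
  have beta: "\<beta> 2 \<in> ?A" "\<beta> 3 \<in> ?A"
    using cube_le_2[OF assms(3)] coords by fastforce+
  then have cross: "card ({\<beta> 2} \<times> ?A \<union> ?A \<times> {\<beta> 3}) = 5"
    by (subst card_cross) auto
  have "\<not> {\<beta> 2} \<times> ?A \<union> ?A \<times> {\<beta> 3} \<subseteq> ?q ` E"
  proof
    assume "{\<beta> 2} \<times> ?A \<union> ?A \<times> {\<beta> 3} \<subseteq> ?q ` E"
    then have "card ({\<beta> 2} \<times> ?A \<union> ?A \<times> {\<beta> 3}) \<le> card (?q ` E)"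
      using assms(4) by (intro card_mono) simp_all
    also have "\<dots> \<le> card E"
      using assms(4) by (rule card_image_le)
    finally show False
      using cross assms(5) by linarith
  qed
  then obtain b c where bc: "(b, c) \<in> {\<beta> 2} \<times> ?A \<union> ?A \<times> {\<beta> 3}" "(b, c) \<notin> ?q ` E"
    by auto
  have "b = \<beta> 2 \<or> c = \<beta> 3" "b \<le> 2" "c \<le> 2"
    using bc(1) beta by auto
  define v where "v = \<alpha>(2 := b, 3 := c)"
  define w where "w = v(1 := (\<alpha> 1 + 1) mod 3)"
  have vw: "v 1 = \<alpha> 1" "v 2 = b" "v 3 = c" "w 2 = b" "w 3 = c" "w 1 \<noteq> v 1"
    unfolding v_def w_def by simp_all presburger
  have avoid: "u \<notin> E" if "u 2 = b" "u 3 = c" for u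
    using bc(2) that by force
  have "v \<in> cube d" "w \<in> cube d"
    unfolding v_def w_def using assms(2) coords \<open>b \<le> 2\<close> \<open>c \<le> 2\<close> by (simp_all add: cube_fun_upd)
  then show thesis
    using that[of v w] avoid vw \<open>b = \<beta> 2 \<or> c = \<beta> 3\<close> by fastforce
qed

theorem claim4p2:
  fixes d :: nat and \<alpha> \<beta> \<gamma> \<delta> :: "nat \<Rightarrow> nat"
  assumes "d \<ge> 3"
    and "\<alpha> \<in> cube d" "\<beta> \<in> cube d" "\<gamma> \<in> cube d" "\<delta> \<in> cube d"
    and "\<alpha> \<noteq> \<beta>" "\<alpha> \<noteq> \<gamma>" "\<alpha> \<noteq> \<delta>" "\<beta> \<noteq> \<gamma>" "\<beta> \<noteq> \<delta>" "\<gamma> \<noteq> \<delta>"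
  shows "(\<exists>v w. v \<in> cube d - {\<alpha>, \<beta>, \<gamma>, \<delta>} \<and> w \<in> cube d - {\<alpha>, \<beta>, \<gamma>, \<delta>} \<and> v \<noteq> w \<and>
            (\<exists>i\<in>{1..d}. \<exists>j\<in>{1..d}. v i = \<alpha> i \<and> v j = \<beta> j))
       \<and> (\<exists>v w. v \<in> cube d - {\<alpha>, \<beta>, \<gamma>, \<delta>} \<and> w \<in> cube d - {\<alpha>, \<beta>, \<gamma>, \<delta>} \<and> v \<noteq> w \<and>
            (\<exists>j\<in>{1..d}. \<exists>I. I \<subseteq> {1..d} \<and> card I = 2 \<and> v j = \<alpha> j \<and> (\<forall>i\<in>I. v i = w i)))"
proof -
  have four: "card {\<alpha>, \<beta>, \<gamma>, \<delta>} \<le> 4"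
    using card_length[of "[\<alpha>, \<beta>, \<gamma>, \<delta>]"] by simp
  obtain v w where vw: "v \<in> cube d - {\<alpha>, \<beta>, \<gamma>, \<delta>}" "w \<in> cube d - {\<alpha>, \<beta>, \<gamma>, \<delta>}" "v \<noteq> w"
      "v 1 = \<alpha> 1" "v 2 = \<beta> 2 \<or> v 3 = \<beta> 3" "v 2 = w 2" "v 3 = w 3"
    by (rule cube_pair_avoiding[OF assms(1-3) _ four]) simp
  have coords: "1 \<in> {1..d}" "2 \<in> {1..d}" "3 \<in> {1..d}" "{2, 3} \<subseteq> {1..d}"
    using assms(1) by auto
  have "\<exists>i\<in>{1..d}. \<exists>j\<in>{1..d}. v i = \<alpha> i \<and> v j = \<beta> j"
    using vw(4,5) coords by blast
  moreover have "\<exists>j\<in>{1..d}. \<exists>I. I \<subseteq> {1..d} \<and> card I = 2 \<and> v j = \<alpha> j \<and> (\<forall>i\<in>I. v i = w i)"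
    using vw(4,6,7) coords by (intro bexI[of _ 1] exI[of _ "{2, 3}"]) auto
  ultimately show ?thesis
    using vw(1-3) by blast
qed

end
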